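(* Let $G$ be a finite simple undirected graph with $n$ vertices, $m$ edges, $k$ connected components, and let $c_1$ denote the number of induced cycles of $G$ whose length is congruent to $1$ modulo $3$. Then $$\mathrm{diss}(G)\;\geq\; n-\frac{1}{3}\big(m+k+c_1\big).$$
   Context: A set $D$ of vertices of a graph $G$ is a dissociation set if the subgraph $G[D]$ induced by $D$ has maximum degree at most $1$. The dissociation number $\mathrm{diss}(G)$ is the maximum cardinality of a dissociation set of $G$. An induced cycle of $G$ is a cycle subgraph $C$ of $G$ (of length at least $3$) such that $G[V(C)]=C$; $c_1$ counts such subgraphs of length $\ell\equiv 1 \pmod 3$. *)

theory Defs
  imports Complex_Main
begin

definition simple_graph :: "'a set \<Rightarrow> ('a \<Rightarrow> 'a \<Rightarrow> bool) \<Rightarrow> bool" where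
  "simple_graph V E \<longleftrightarrow> finite V \<and> (\<forall>u v. E u v \<longrightarrow> u \<in> V \<and> v \<in> V)
     \<and> (\<forall>u v. E u v \<longrightarrow> E v u) \<and> (\<forall>v. \<not> E v v)"

definition edges :: "('a \<Rightarrow> 'a \<Rightarrow> bool) \<Rightarrow> 'a set set" where
  "edges E = {{u, v} | u v. E u v}"

definition num_edges :: "('a \<Rightarrow> 'a \<Rightarrow> bool) \<Rightarrow> nat" where
  "num_edges E = card (edges E)"

definition reach :: "'a set \<Rightarrow> ('a \<Rightarrow> 'a \<Rightarrow> bool) \<Rightarrow> ('a \<times> 'a) set" where
  "reach V E = {(u, v). u \<in> V \<and> v \<in> V \<and> (\<lambda>x y. E x y \<and> x \<in> V \<and> y \<in> V)\<^sup>*\<^sup>* u v}"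

definition num_components :: "'a set \<Rightarrow> ('a \<Rightarrow> 'a \<Rightarrow> bool) \<Rightarrow> nat" where
  "num_components V E = card (V // reach V E)"

definition dissociation_set :: "'a set \<Rightarrow> ('a \<Rightarrow> 'a \<Rightarrow> bool) \<Rightarrow> 'a set \<Rightarrow> bool" where
  "dissociation_set V E D \<longleftrightarrow> D \<subseteq> V \<and> (\<forall>v\<in>D. card {u\<in>D. E v u} \<le> 1)"

definition diss :: "'a set \<Rightarrow> ('a \<Rightarrow> 'a \<Rightarrow> bool) \<Rightarrow> nat" where
  "diss V E = Max {card D | D. dissociation_set V E D}"

text \<open>Since an induced cycle C
  satisfies G[V(C)] = C, it is determined by its vertex set.\<close>
definition induced_cycle_set :: "'a set \<Rightarrow> ('a \<Rightarrow> 'a \<Rightarrow> bool) \<Rightarrow> 'a set \<Rightarrow> bool" where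
  "induced_cycle_set V E S \<longleftrightarrow> S \<subseteq> V \<and>
     (\<exists>vs. distinct vs \<and> length vs \<ge> 3 \<and> set vs = S \<and>
        (\<forall>i<length vs. \<forall>j<length vs.
           E (vs ! i) (vs ! j) \<longleftrightarrow> (j = Suc i mod length vs \<or> i = Suc j mod length vs)))"

definition c1 :: "'a set \<Rightarrow> ('a \<Rightarrow> 'a \<Rightarrow> bool) \<Rightarrow> nat" where
  "c1 V E = card {S. induced_cycle_set V E S \<and> card S mod 3 = 1}"

end

theory Submission imports Defs begin

text \<open>
  Call (S, T) reducible if T \<subseteq> S \<noteq> {},
  no edge leaves S - T, the graph induced on S - T has maximum degree at most 1, and
  3 |T| + a(S) \<le> e(S) + 1 + [S contains an induced cycle of length 1 mod 3], where e(S) counts the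
  edges meeting S and a(S) the components of G - S adjacent to S. Deleting S then lowers m + k + c1
  by at least 3 |T|, and S - T extends every dissociation set of G - S, so the bound for G - S
  gives the bound for G.

  Reducible configurations sit at the end of a longest path from a root r. If the last vertex has
  degree at least 3 it is reducible on its own; if it is a leaf, it is reducible together with its
  neighbour and at most one further vertex; if it has degree 2, it closes a cycle. When all cycle
  vertices except the attachment vertex have degree 2, the cycle is reducible with every third
  vertex in T, cycle lengths 1 mod 3 being paid for by c1. Otherwise a cycle vertex z has a further
  neighbour w: either w reaches the cycle again in G - z, and z alone is reducible, or the component
  of w in G - z is a smaller branch rooted at z, and the argument recurses.
\<close>

definition induced :: "('a \<Rightarrow> 'a \<Rightarrow> bool) \<Rightarrow> 'a set \<Rightarrow> 'a \<Rightarrow> 'a \<Rightarrow> bool" where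
  "induced E X = (\<lambda>x y. E x y \<and> x \<in> X \<and> y \<in> X)"

definition connected_in :: "('a \<Rightarrow> 'a \<Rightarrow> bool) \<Rightarrow> 'a set \<Rightarrow> 'a \<Rightarrow> 'a \<Rightarrow> bool" where
  "connected_in E X = (induced E X)\<^sup>*\<^sup>*"

definition budget :: "'a set \<Rightarrow> ('a \<Rightarrow> 'a \<Rightarrow> bool) \<Rightarrow> nat" where
  "budget V E = num_edges E + num_components V E + c1 V E"

lemma reach_conv_connected_in: "reach X E = {(u, v). u \<in> X \<and> v \<in> X \<and> connected_in E X u v}"
  unfolding reach_def connected_in_def induced_def ..

lemma connected_in_refl: "connected_in E X x x"
  unfolding connected_in_def by simp

lemma connected_in_trans: "connected_in E X x y \<Longrightarrow> connected_in E X y z \<Longrightarrow> connected_in E X x z"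
  unfolding connected_in_def by (rule rtranclp_trans)

lemma connected_in_edge: "E x y \<Longrightarrow> x \<in> X \<Longrightarrow> y \<in> X \<Longrightarrow> connected_in E X x y"
  unfolding connected_in_def induced_def by auto

lemma connected_in_closed: "connected_in E X x y \<Longrightarrow> x \<in> X \<Longrightarrow> y \<in> X"
  unfolding connected_in_def induced_def by (induction rule: rtranclp_induct) auto

lemma connected_in_mono: "connected_in E X x y \<Longrightarrow> X \<subseteq> Y \<Longrightarrow> connected_in E Y x y"
  unfolding connected_in_def induced_def
  by (induction rule: rtranclp_induct) (auto intro: rtranclp.rtrancl_into_rtrancl)

lemma dissociation_set_induced: "dissociation_set X (induced E X) D = dissociation_set X E D"
proof -
  have "{u \<in> D. induced E X v u} = {u \<in> D. E v u}" if "D \<subseteq> X" "v \<in> D" for v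
    using that by (auto simp: induced_def)
  then show ?thesis unfolding dissociation_set_def by auto
qed

lemma diss_induced: "diss X (induced E X) = diss X E"
  unfolding diss_def dissociation_set_induced ..

lemma num_components_induced: "num_components X (induced E X) = num_components X E"
  unfolding num_components_def reach_def induced_def by simp

lemma induced_cycle_set_induced: "induced_cycle_set X (induced E X) C = induced_cycle_set X E C"
proof -
  have "induced E X (vs ! i) (vs ! j) = E (vs ! i) (vs ! j)"
    if "set vs \<subseteq> X" "i < length vs" "j < length vs" for vs i j
    using that nth_mem by (fastforce simp: induced_def)
  then show ?thesis unfolding induced_cycle_set_def by (intro conj_cong ex_cong refl) auto
qed

lemma c1_induced: "c1 X (induced E X) = c1 X E"
  unfolding c1_def induced_cycle_set_induced ..

lemma finite_dissociation_cards: "finite X \<Longrightarrow> finite {card D | D. dissociation_set X E D}"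
  by (rule finite_subset[of _ "{0..card X}"]) (auto simp: dissociation_set_def intro: card_mono)

lemma card_le_diss: "finite X \<Longrightarrow> dissociation_set X E D \<Longrightarrow> card D \<le> diss X E"
  unfolding diss_def using finite_dissociation_cards by (intro Max_ge) auto

lemma diss_attained:
  assumes "finite X"
  obtains D where "dissociation_set X E D" "card D = diss X E"
proof -
  have "dissociation_set X E {}" by (simp add: dissociation_set_def)
  then have "{card D | D. dissociation_set X E D} \<noteq> {}" by blast
  from Max_in[OF finite_dissociation_cards[OF assms] this] show ?thesis
    using that unfolding diss_def by auto
qed

lemma card_le_1_if_subset_singleton: "A \<subseteq> {a} \<Longrightarrow> card A \<le> 1"
  using subset_singletonD by fastforce

lemma card_image_less_if_not_inj:
  assumes "finite A" "a \<in> A" "b \<in> A" "a \<noteq> b" "f a = f b"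
  shows "card (f ` A) < card A"
proof -
  have "\<not> inj_on f A" using assms(2-5) by (auto simp: inj_on_def)
  then show ?thesis using card_image_le[OF assms(1), of f] inj_on_iff_eq_card[OF assms(1), of f]
    by linarith
qed

lemma card_image_add_two_le:
  assumes "finite A" "a \<in> A" "b \<in> A" "c \<in> A" "a \<noteq> b" "a \<noteq> c" "b \<noteq> c" "f a = f c" "f b = f c"
  shows "card (f ` A) + 2 \<le> card A"
proof -
  have "f ` A = f ` (A - {a})" using assms(4,6,8) by (auto simp: image_iff)
  moreover have "card (f ` (A - {a})) < card (A - {a})"
    using assms by (intro card_image_less_if_not_inj[of _ b c]) auto
  ultimately have "card (f ` A) < card (A - {a})" by simp
  moreover have "card (A - {a}) < card A" using assms(1,2) by (rule card_Diff1_less)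
  ultimately show ?thesis by linarith
qed

locale finite_graph =
  fixes V :: "'a set" and E :: "'a \<Rightarrow> 'a \<Rightarrow> bool"
  assumes simple: "simple_graph V E"
begin

lemma finite_V: "finite V"
  using simple by (simp add: simple_graph_def)

lemma adj_in_V:
  assumes "E u v" shows "u \<in> V" "v \<in> V"
  using simple assms by (simp_all add: simple_graph_def)

lemma adj_sym: "E u v \<Longrightarrow> E v u"
  using simple by (simp add: simple_graph_def)

lemma not_adj_self: "\<not> E v v"
  using simple by (simp add: simple_graph_def)

lemma adj_neq: "E u v \<Longrightarrow> u \<noteq> v"
  using not_adj_self by auto

lemma simple_graph_delete: "simple_graph (V - S) (induced E (V - S))"
  using simple finite_V unfolding simple_graph_def induced_def by auto

definition nbhd :: "'a \<Rightarrow> 'a set" where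
  "nbhd v = {u. E v u}"

lemma in_nbhd_iff [simp]: "u \<in> nbhd v \<longleftrightarrow> E v u"
  by (simp add: nbhd_def)

lemma nbhd_eq_iff: "nbhd v = A \<longleftrightarrow> (\<forall>u. E v u \<longleftrightarrow> u \<in> A)"
  by (auto simp: nbhd_def)

lemma finite_nbhd: "finite (nbhd v)"
  by (rule finite_subset[OF _ finite_V]) (auto dest: adj_in_V)

lemma connected_in_sym: "connected_in E X x y \<Longrightarrow> connected_in E X y x"
  unfolding connected_in_def
proof (induction rule: rtranclp_induct)
  case (step y z)
  then have "induced E X z y" using adj_sym by (auto simp: induced_def)
  then show ?case using step(3) by (rule converse_rtranclp_into_rtranclp)
qed simp

definition comp_of :: "'a set \<Rightarrow> 'a \<Rightarrow> 'a set" where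
  "comp_of S y = reach (V - S) E `` {y}"

lemma comp_of_eq:
  assumes "connected_in E (V - S) y z"
  shows "comp_of S y = comp_of S z"
proof -
  have zy: "connected_in E (V - S) z y" using assms by (rule connected_in_sym)
  have "y \<in> V - S \<longleftrightarrow> z \<in> V - S"
    using connected_in_closed[OF assms] connected_in_closed[OF zy] by blast
  then show ?thesis unfolding comp_of_def reach_conv_connected_in
    using connected_in_trans[OF assms] connected_in_trans[OF zy] by auto
qed

definition outer_nbhd :: "'a set \<Rightarrow> 'a set" where
  "outer_nbhd S = {y \<in> V - S. \<exists>v\<in>S. E y v}"

lemma finite_outer_nbhd: "finite (outer_nbhd S)"
  unfolding outer_nbhd_def using finite_V by auto

lemma outer_nbhd_subset_nbhd: "outer_nbhd S \<subseteq> (\<Union>v\<in>S. nbhd v) - S"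
proof
  fix y assume "y \<in> outer_nbhd S"
  then obtain v where "v \<in> S" "E y v" "y \<notin> S" by (auto simp: outer_nbhd_def)
  then show "y \<in> (\<Union>v\<in>S. nbhd v) - S" using adj_sym[of y v] by auto
qed

definition adjacent_components :: "'a set \<Rightarrow> 'a set set" where
  "adjacent_components S = comp_of S ` outer_nbhd S"

lemma card_adjacent_components_le_image:
  "outer_nbhd S \<subseteq> B \<Longrightarrow> finite B \<Longrightarrow> card (adjacent_components S) \<le> card (comp_of S ` B)"
  unfolding adjacent_components_def by (intro card_mono) auto

lemma card_adjacent_components_le:
  "outer_nbhd S \<subseteq> B \<Longrightarrow> finite B \<Longrightarrow> card (adjacent_components S) \<le> card B"
  using card_adjacent_components_le_image card_image_le le_trans by meson

definition edges_meeting :: "'a set \<Rightarrow> 'a set set" where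
  "edges_meeting S = {e \<in> edges E. e \<inter> S \<noteq> {}}"

lemma finite_edges: "finite (edges E)"
  by (rule finite_subset[of _ "Pow V"]) (auto simp: edges_def finite_V dest: adj_in_V)

lemma num_edges_delete: "num_edges E = num_edges (induced E (V - S)) + card (edges_meeting S)"
proof -
  let ?A = "edges (induced E (V - S))"
  have "e \<in> ?A" if "e \<in> edges E" "e \<inter> S = {}" for e
    using that adj_in_V unfolding edges_def induced_def by blast
  then have "edges E = ?A \<union> edges_meeting S"
    by (auto simp: edges_def edges_meeting_def induced_def)
  moreover have "?A \<inter> edges_meeting S = {}"
    by (auto simp: edges_def edges_meeting_def induced_def)
  moreover have "?A \<subseteq> edges E" by (auto simp: edges_def induced_def)
  then have "finite ?A" "finite (edges_meeting S)"
    using finite_edges by (auto simp: edges_meeting_def intro: finite_subset)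
  ultimately show ?thesis unfolding num_edges_def by (simp add: card_Un_disjoint)
qed

lemma card_nbhd_add_le_edges_meeting:
  assumes "v \<in> S" "P \<subseteq> edges_meeting S" "\<forall>e\<in>P. v \<notin> e"
  shows "card (nbhd v) + card P \<le> card (edges_meeting S)"
proof -
  let ?star = "(\<lambda>u. {v, u}) ` nbhd v"
  have inj: "inj_on (\<lambda>u. {v, u}) (nbhd v)"
    by (auto simp: inj_on_def doubleton_eq_iff dest: adj_neq)
  have "?star \<subseteq> edges_meeting S" using assms(1) unfolding edges_meeting_def edges_def by auto blast
  moreover have "?star \<inter> P = {}" using assms(3) by auto
  moreover have "finite (edges_meeting S)" using finite_edges by (simp add: edges_meeting_def)
  ultimately have "card (?star \<union> P) \<le> card (edges_meeting S)"
    using assms(2) by (intro card_mono) auto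
  moreover have "card (?star \<union> P) = card ?star + card P"
    using assms(2) \<open>finite (edges_meeting S)\<close> finite_nbhd \<open>?star \<inter> P = {}\<close>
    by (intro card_Un_disjoint) (auto intro: finite_subset)
  ultimately show ?thesis using inj by (simp add: card_image)
qed

lemma card_nbhd_le_edges_meeting: "v \<in> S \<Longrightarrow> card (nbhd v) \<le> card (edges_meeting S)"
  using card_nbhd_add_le_edges_meeting[of v S "{}"] by simp

lemma component_not_adjacent:
  assumes "Q \<in> (V - S) // reach (V - S) E" and "\<forall>u\<in>Q. \<forall>v\<in>S. \<not> E u v"
  shows "Q \<in> V // reach V E"
proof -
  obtain x where x: "x \<in> V - S" "Q = reach (V - S) E `` {x}"
    using assms(1) by (auto elim: quotientE)
  have "connected_in E (V - S) x y" if "connected_in E V x y" for y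
    using that unfolding connected_in_def
  proof (induction rule: rtranclp_induct)
    case (step y z)
    then have xy: "connected_in E (V - S) x y" by (simp add: connected_in_def)
    have y: "y \<in> V - S" using connected_in_closed[OF xy x(1)] .
    then have "y \<in> Q" using x xy by (simp add: reach_conv_connected_in)
    then have "z \<in> V - S" using assms(2) step(2) by (auto simp: induced_def)
    then have "connected_in E (V - S) y z" using step(2) y by (intro connected_in_edge) (auto simp: induced_def)
    with xy have "connected_in E (V - S) x z" by (rule connected_in_trans)
    then show ?case by (simp add: connected_in_def)
  qed simp
  then have "connected_in E V x y \<longleftrightarrow> connected_in E (V - S) x y" for y
    using connected_in_mono[of E "V - S" x y V] by blast
  then have "Q = reach V E `` {x}"
    using x by (auto simp: reach_conv_connected_in dest: connected_in_closed)
  then show ?thesis using x(1) by (auto intro: quotientI)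
qed

lemma adjacent_classes_subset:
  "{Q \<in> (V - S) // reach (V - S) E. \<exists>u\<in>Q. \<exists>v\<in>S. E u v} \<subseteq> adjacent_components S"
proof
  fix Q assume Q: "Q \<in> {Q \<in> (V - S) // reach (V - S) E. \<exists>u\<in>Q. \<exists>v\<in>S. E u v}"
  then obtain u v where u: "u \<in> Q" "v \<in> S" "E u v" by blast
  from Q obtain x where x: "Q = reach (V - S) E `` {x}" "x \<in> V - S" by (auto elim: quotientE)
  then have "connected_in E (V - S) x u" "u \<in> V - S" using u(1) by (auto simp: reach_conv_connected_in)
  then have "Q = comp_of S u" using x comp_of_eq[of S x u] by (simp add: comp_of_def)
  moreover have "u \<in> outer_nbhd S" using u \<open>u \<in> V - S\<close> by (auto simp: outer_nbhd_def)
  ultimately show "Q \<in> adjacent_components S" unfolding adjacent_components_def by blast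
qed

lemma num_components_delete:
  assumes "S \<subseteq> V" "S \<noteq> {}"
  shows "num_components (V - S) E + 1 \<le> num_components V E + card (adjacent_components S)"
proof -
  let ?R = "reach V E" and ?R' = "reach (V - S) E"
  let ?A = "{Q \<in> (V - S) // ?R'. \<exists>u\<in>Q. \<exists>v\<in>S. E u v}"
  obtain v0 where v0: "v0 \<in> S" using assms by auto
  have v0_comp: "?R `` {v0} \<in> V // ?R" using v0 assms(1) by (auto intro: quotientI)
  have fin: "finite (V // ?R)" by (rule finite_quotient) (auto simp: finite_V reach_def)
  have "(V - S) // ?R' - ?A \<subseteq> V // ?R - {?R `` {v0}}"
  proof
    fix Q assume Q: "Q \<in> (V - S) // ?R' - ?A"
    then have "Q \<in> V // ?R" using component_not_adjacent by blast
    moreover have "Q \<subseteq> V - S" using Q by (auto elim!: quotientE simp: reach_def)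
    then have "v0 \<notin> Q" using v0 by blast
    moreover have "v0 \<in> ?R `` {v0}" using v0 assms(1) connected_in_refl by (auto simp: reach_conv_connected_in)
    ultimately show "Q \<in> V // ?R - {?R `` {v0}}" by auto
  qed
  then have "card ((V - S) // ?R' - ?A) \<le> card (V // ?R - {?R `` {v0}})"
    using fin by (intro card_mono) auto
  also have "\<dots> = card (V // ?R) - 1" using v0_comp by simp
  finally have "card ((V - S) // ?R' - ?A) \<le> card (V // ?R) - 1" .
  moreover have "card (V // ?R) \<ge> 1" using v0_comp fin by (auto simp: Suc_le_eq card_gt_0_iff)
  moreover have "card ?A \<le> card (adjacent_components S)"
    using adjacent_classes_subset finite_outer_nbhd by (intro card_mono) (auto simp: adjacent_components_def)
  moreover have "card ((V - S) // ?R') \<le> card ((V - S) // ?R' - ?A) + card ?A"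
  proof -
    have "(V - S) // ?R' = ((V - S) // ?R' - ?A) \<union> ?A" by blast
    then have "card ((V - S) // ?R') = card (((V - S) // ?R' - ?A) \<union> ?A)" by simp
    also have "\<dots> \<le> card ((V - S) // ?R' - ?A) + card ?A" by (rule card_Un_le)
    finally show ?thesis .
  qed
  ultimately show ?thesis unfolding num_components_def by linarith
qed

definition contains_c1_cycle :: "'a set \<Rightarrow> bool" where
  "contains_c1_cycle S \<longleftrightarrow> (\<exists>C \<subseteq> S. induced_cycle_set V E C \<and> card C mod 3 = 1)"

lemma c1_delete:
  assumes "S \<subseteq> V"
  shows "c1 (V - S) E + of_bool (contains_c1_cycle S) \<le> c1 V E"
proof -
  let ?F = "\<lambda>X. {C. induced_cycle_set X E C \<and> card C mod 3 = 1}"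
  have sub: "?F (V - S) \<subseteq> ?F V" by (auto simp: induced_cycle_set_def)
  have fin: "finite (?F V)"
    by (rule finite_subset[of _ "Pow V"]) (auto simp: induced_cycle_set_def finite_V)
  show ?thesis
  proof (cases "contains_c1_cycle S")
    case True
    then obtain C where C: "C \<subseteq> S" "C \<in> ?F V" by (auto simp: contains_c1_cycle_def)
    moreover have "C \<noteq> {}" using C by (auto simp: induced_cycle_set_def)
    ultimately have "\<not> C \<subseteq> V - S" by blast
    then have "C \<notin> ?F (V - S)" by (auto simp: induced_cycle_set_def)
    then have "?F (V - S) \<subseteq> ?F V - {C}" using sub by blast
    then have "card (?F (V - S)) < card (?F V)"
      using fin C(2) by (meson card_Diff1_less card_mono finite_Diff le_less_trans)
    then show ?thesis using True unfolding c1_def by simp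
  next
    case False
    then show ?thesis unfolding c1_def using sub fin by (simp add: card_mono)
  qed
qed

lemma budget_delete:
  assumes "S \<subseteq> V" "S \<noteq> {}"
  shows "budget (V - S) (induced E (V - S)) + card (edges_meeting S) + 1 + of_bool (contains_c1_cycle S)
    \<le> budget V E + card (adjacent_components S)"
  using num_edges_delete[of S] num_components_delete[OF assms] c1_delete[OF assms(1)]
  unfolding budget_def c1_induced num_components_induced by linarith

lemma diss_delete:
  assumes "S \<subseteq> V" "T \<subseteq> S"
    and closed: "\<forall>v\<in>S - T. \<forall>u. E v u \<longrightarrow> u \<in> S"
    and deg: "\<forall>v\<in>S - T. card {u\<in>S - T. E v u} \<le> 1"
  shows "diss (V - S) E + card (S - T) \<le> diss V E"
proof -
  obtain D where D: "dissociation_set (V - S) E D" "card D = diss (V - S) E"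
    using diss_attained finite_V by blast
  have DV: "D \<subseteq> V - S" using D by (simp add: dissociation_set_def)
  have "dissociation_set V E (D \<union> (S - T))"
    unfolding dissociation_set_def
  proof (intro conjI ballI)
    show "D \<union> (S - T) \<subseteq> V" using DV assms(1) by auto
  next
    fix v assume v: "v \<in> D \<union> (S - T)"
    show "card {u \<in> D \<union> (S - T). E v u} \<le> 1"
    proof (cases "v \<in> D")
      case True
      have "\<not> E v u" if "u \<in> S - T" for u
        using closed that True DV adj_sym by blast
      then have "{u \<in> D \<union> (S - T). E v u} = {u \<in> D. E v u}" by auto
      then show ?thesis using D(1) True by (simp add: dissociation_set_def)
    next
      case False
      then have "{u \<in> D \<union> (S - T). E v u} = {u \<in> S - T. E v u}" using closed v DV by auto
      then show ?thesis using deg v False by simp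
    qed
  qed
  then have "card (D \<union> (S - T)) \<le> diss V E" using card_le_diss finite_V by blast
  moreover have "card (D \<union> (S - T)) = card D + card (S - T)"
    using DV finite_V assms(1) by (intro card_Un_disjoint) (auto intro: finite_subset)
  ultimately show ?thesis using D(2) by simp
qed

definition reducible :: "'a set \<Rightarrow> 'a set \<Rightarrow> bool" where
  "reducible S T \<longleftrightarrow> S \<subseteq> V \<and> S \<noteq> {} \<and> T \<subseteq> S
     \<and> (\<forall>v\<in>S - T. \<forall>u. E v u \<longrightarrow> u \<in> S)
     \<and> (\<forall>v\<in>S - T. card {u\<in>S - T. E v u} \<le> 1)
     \<and> 3 * card T + card (adjacent_components S)
         \<le> card (edges_meeting S) + 1 + of_bool (contains_c1_cycle S)"

lemma reducibleI:
  assumes "S \<subseteq> V" "S \<noteq> {}" "T \<subseteq> S"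
    and "\<And>v u. v \<in> S - T \<Longrightarrow> E v u \<Longrightarrow> u \<in> S"
    and "\<And>v. v \<in> S - T \<Longrightarrow> card {u\<in>S - T. E v u} \<le> 1"
    and "3 * card T + card (adjacent_components S)
      \<le> card (edges_meeting S) + 1 + of_bool (contains_c1_cycle S)"
  shows "reducible S T"
  using assms unfolding reducible_def by blast

lemma bound_from_reducible:
  assumes "reducible S T"
    and "3 * card (V - S) \<le> 3 * diss (V - S) (induced E (V - S)) + budget (V - S) (induced E (V - S))"
  shows "3 * card V \<le> 3 * diss V E + budget V E"
proof -
  have ST: "S \<subseteq> V" "S \<noteq> {}" "T \<subseteq> S" using assms(1) by (auto simp: reducible_def)
  have "diss (V - S) E + card (S - T) \<le> diss V E"
    using assms(1) by (intro diss_delete) (auto simp: reducible_def)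
  moreover have "card V = card (V - S) + card T + card (S - T)"
  proof -
    have "finite S" using ST(1) finite_V finite_subset by blast
    then have "card (V - S) = card V - card S" "card (S - T) = card S - card T"
      using ST(1,3) by (simp_all add: card_Diff_subset finite_subset[OF ST(3)])
    moreover have "card S \<le> card V" "card T \<le> card S"
      using ST(1,3) finite_V \<open>finite S\<close> by (simp_all add: card_mono)
    ultimately show ?thesis by linarith
  qed
  moreover have "3 * card T + budget (V - S) (induced E (V - S)) \<le> budget V E"
    using assms(1) budget_delete[OF ST(1,2)] by (auto simp: reducible_def)
  ultimately show ?thesis using assms(2) unfolding diss_induced by linarith
qed

lemma reducible_isolated_vertex:
  assumes "v \<in> V" "nbhd v = {}"
  shows "reducible {v} {}"
proof -
  have v: "\<not> E v u" for u using assms(2) by (auto simp: nbhd_eq_iff)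
  then have "outer_nbhd {v} = {}" using outer_nbhd_subset_nbhd assms(2) by auto
  then show ?thesis using assms(1) v unfolding reducible_def adjacent_components_def by simp
qed

lemma reducible_isolated_edge:
  assumes "nbhd x = {u}" "nbhd u = {x}"
  shows "reducible {x, u} {}"
proof -
  have x: "E x t \<longleftrightarrow> t = u" and u: "E u t \<longleftrightarrow> t = x" for t
    using assms by (auto simp: nbhd_eq_iff)
  then have xu: "x \<noteq> u" "x \<in> V" "u \<in> V" using adj_neq adj_in_V by blast+
  have "outer_nbhd {x, u} = {}" using outer_nbhd_subset_nbhd assms by auto
  moreover have "card {t \<in> {x, u}. E v t} \<le> 1" if "v \<in> {x, u}" for v
    using that x u xu by (auto simp: card_le_Suc0_iff_eq)
  ultimately show ?thesis
    unfolding reducible_def adjacent_components_def using x u xu by auto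
qed

lemma reducible_singleton:
  assumes "v \<in> V" "card (adjacent_components {v}) + 2 \<le> card (nbhd v)"
  shows "reducible {v} {v}"
proof -
  have "card (nbhd v) \<le> card (edges_meeting {v})" by (rule card_nbhd_le_edges_meeting) simp
  then show ?thesis using assms unfolding reducible_def by simp
qed

lemma reducible_leaf_pair:
  assumes "nbhd x = {u}"
    and "card (comp_of {x, u} ` (nbhd u - {x})) < card (nbhd u - {x})"
  shows "reducible {x, u} {u}"
proof (rule reducibleI)
  have x: "E x t \<longleftrightarrow> t = u" for t using assms(1) by (auto simp: nbhd_eq_iff)
  then have xu: "E u x" "x \<noteq> u" "x \<in> V" "u \<in> V" using adj_sym adj_neq adj_in_V by blast+
  then show "{x, u} \<subseteq> V" by simp
  show "v \<in> {x, u} - {u} \<Longrightarrow> E v t \<Longrightarrow> t \<in> {x, u}" for v t using x by auto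
  show "card {t \<in> {x, u} - {u}. E v t} \<le> 1" for v by (rule card_le_1_if_subset_singleton) auto
  have "outer_nbhd {x, u} \<subseteq> nbhd u - {x}" using outer_nbhd_subset_nbhd assms(1) by auto
  then have "card (adjacent_components {x, u}) \<le> card (comp_of {x, u} ` (nbhd u - {x}))"
    using finite_nbhd by (intro card_adjacent_components_le_image) auto
  moreover have "card (nbhd u - {x}) = card (nbhd u) - 1" using xu finite_nbhd by simp
  moreover have "card (nbhd u) \<le> card (edges_meeting {x, u})" by (rule card_nbhd_le_edges_meeting) simp
  ultimately show "3 * card {u} + card (adjacent_components {x, u})
    \<le> card (edges_meeting {x, u}) + 1 + of_bool (contains_c1_cycle {x, u})"
    using assms(2) by simp
qed auto

lemma reducible_two_leaves:
  assumes "nbhd x = {u}" "nbhd w = {u}" "x \<noteq> w"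
  shows "reducible {x, w, u} {u}"
proof (rule reducibleI)
  have x: "E x t \<longleftrightarrow> t = u" and w: "E w t \<longleftrightarrow> t = u" for t
    using assms by (auto simp: nbhd_eq_iff)
  then have u: "E u x" "E u w" "x \<noteq> u" "w \<noteq> u" "x \<in> V" "w \<in> V" "u \<in> V"
    using adj_sym adj_neq adj_in_V by blast+
  then show "{x, w, u} \<subseteq> V" by simp
  show "v \<in> {x, w, u} - {u} \<Longrightarrow> E v t \<Longrightarrow> t \<in> {x, w, u}" for v t using x w by auto
  show "card {t \<in> {x, w, u} - {u}. E v t} \<le> 1" if "v \<in> {x, w, u} - {u}" for v
    using that x w by (intro card_le_1_if_subset_singleton[of _ u]) auto
  have "outer_nbhd {x, w, u} \<subseteq> nbhd u - {x, w}" using outer_nbhd_subset_nbhd assms by auto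
  then have "card (adjacent_components {x, w, u}) \<le> card (nbhd u - {x, w})"
    using finite_nbhd by (intro card_adjacent_components_le) auto
  moreover have "card (nbhd u - {x, w}) = card (nbhd u) - 2"
    using u assms(3) finite_nbhd by (simp add: card_Diff_subset)
  moreover have "card {x, w} \<le> card (nbhd u)" using u finite_nbhd by (intro card_mono) auto
  moreover have "card (nbhd u) \<le> card (edges_meeting {x, w, u})" by (rule card_nbhd_le_edges_meeting) simp
  ultimately show "3 * card {u} + card (adjacent_components {x, w, u})
    \<le> card (edges_meeting {x, w, u}) + 1 + of_bool (contains_c1_cycle {x, w, u})"
    using assms(3) by simp
qed auto

lemma reducible_pendant_path:
  assumes "nbhd x = {u}" "nbhd u = {x, v}" "x \<noteq> v"
  shows "reducible {x, u, v} {v}"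
proof (rule reducibleI)
  have x: "E x t \<longleftrightarrow> t = u" and u: "E u t \<longleftrightarrow> t = x \<or> t = v" for t
    using assms by (auto simp: nbhd_eq_iff)
  then have "E x u" "E u v" by simp_all
  then have v: "E v u" "x \<noteq> u" "u \<noteq> v" "x \<in> V" "u \<in> V" "v \<in> V"
    using adj_sym adj_neq adj_in_V by simp_all
  then show "{x, u, v} \<subseteq> V" by simp
  show "w \<in> {x, u, v} - {v} \<Longrightarrow> E w t \<Longrightarrow> t \<in> {x, u, v}" for w t using x u by auto
  show "card {t \<in> {x, u, v} - {v}. E w t} \<le> 1" if "w \<in> {x, u, v} - {v}" for w
    using that x u by (intro card_le_1_if_subset_singleton[of _ "if w = x then u else x"]) auto
  have "outer_nbhd {x, u, v} \<subseteq> nbhd v - {u}" using outer_nbhd_subset_nbhd assms by auto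
  then have "card (adjacent_components {x, u, v}) \<le> card (nbhd v - {u})"
    using finite_nbhd by (intro card_adjacent_components_le) auto
  moreover have "card (nbhd v - {u}) = card (nbhd v) - 1" using v finite_nbhd by simp
  moreover have "{x, u} \<in> edges E" using x unfolding edges_def by blast
  then have "card (nbhd v) + card {{x, u}} \<le> card (edges_meeting {x, u, v})"
    using v assms(3) by (intro card_nbhd_add_le_edges_meeting) (auto simp: edges_meeting_def)
  moreover have "card (nbhd v) \<ge> 1" using v finite_nbhd by (auto simp: Suc_le_eq card_gt_0_iff)
  ultimately show "3 * card {v} + card (adjacent_components {x, u, v})
    \<le> card (edges_meeting {x, u, v}) + 1 + of_bool (contains_c1_cycle {x, u, v})"
    by simp
qed auto

definition is_path :: "'a list \<Rightarrow> bool" where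
  "is_path q \<longleftrightarrow> distinct q \<and> (\<forall>k. Suc k < length q \<longrightarrow> E (q ! k) (q ! Suc k))"

lemma is_path_take: "is_path q \<Longrightarrow> is_path (take k q)"
  unfolding is_path_def by auto

lemma is_path_snoc:
  assumes "is_path q" "q \<noteq> []" "y \<notin> set q" "E (last q) y"
  shows "is_path (q @ [y])"
  unfolding is_path_def
proof (intro conjI allI impI)
  show "distinct (q @ [y])" using assms(1,3) by (simp add: is_path_def)
  fix k assume k: "Suc k < length (q @ [y])"
  show "E ((q @ [y]) ! k) ((q @ [y]) ! Suc k)"
  proof (cases "Suc k < length q")
    case True then show ?thesis using assms(1) by (simp add: is_path_def nth_append)
  next
    case False
    then have "k = length q - 1" using k by simp
    then show ?thesis using assms(2,4) False by (simp add: nth_append last_conv_nth)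
  qed
qed

lemma connected_in_along_path:
  assumes "is_path q" "a < length q" "b < length q"
    and "\<forall>k. min a b \<le> k \<and> k \<le> max a b \<longrightarrow> q ! k \<in> X"
  shows "connected_in E X (q ! a) (q ! b)"
proof -
  have "connected_in E X (q ! a) (q ! b)"
    if "a \<le> b" "b < length q" "\<forall>k. a \<le> k \<and> k \<le> b \<longrightarrow> q ! k \<in> X" for a b
    using that
  proof (induction b)
    case (Suc b)
    show ?case
    proof (cases "a = Suc b")
      case False
      then have "connected_in E X (q ! a) (q ! b)" using Suc by auto
      moreover have "E (q ! b) (q ! Suc b)" using assms(1) Suc.prems(2) by (simp add: is_path_def)
      ultimately show ?thesis
        using Suc.prems False connected_in_edge connected_in_trans by (metis le_Suc_eq order_refl)
    qed (simp add: connected_in_refl)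
  qed (simp add: connected_in_refl)
  then show ?thesis using assms(2-4) connected_in_sym
    by (cases "a \<le> b") (auto simp: min_def max_def)
qed

lemma connected_in_along_path_avoiding:
  assumes "is_path q" "set q \<subseteq> V" "a < length q" "b < length q"
    and "\<forall>k. min a b \<le> k \<and> k \<le> max a b \<longrightarrow> q ! k \<notin> X"
  shows "connected_in E (V - X) (q ! a) (q ! b)"
  using assms by (intro connected_in_along_path) (auto simp: min_def max_def split: if_splits)

text \<open>W is a union of components of G - r. Unless W is all of V - r, the root has a neighbour in W
  and two more neighbours outside W that are joined in G - r - W; this is what makes a leaf at the
  root reducible, and it holds for the smaller branches the recursion produces.\<close>
definition branch :: "'a \<Rightarrow> 'a set \<Rightarrow> bool" where
  "branch r W \<longleftrightarrow> r \<in> V \<and> W \<subseteq> V \<and> r \<notin> W \<and> (\<forall>u\<in>W. \<forall>v. E u v \<longrightarrow> v \<in> W \<or> v = r)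
     \<and> (W = V - {r} \<or> ((\<exists>w\<in>W. E r w) \<and> (\<exists>y z. y \<noteq> z \<and> E r y \<and> E r z \<and> y \<notin> W \<and> z \<notin> W
          \<and> connected_in E (V - insert r W) y z)))"

definition rooted_paths :: "'a \<Rightarrow> 'a set \<Rightarrow> 'a list set" where
  "rooted_paths r W = {q. q \<noteq> [] \<and> q ! 0 = r \<and> set q \<subseteq> insert r W \<and> is_path q}"

lemma finite_rooted_paths: "W \<subseteq> V \<Longrightarrow> finite (rooted_paths r W)"
proof -
  assume "W \<subseteq> V"
  then have "finite (insert r W)" using finite_V finite_subset by auto
  then have "finite {xs. set xs \<subseteq> insert r W \<and> distinct xs}" by (rule finite_subset_distinct)
  then show ?thesis by (rule rev_finite_subset) (auto simp: rooted_paths_def is_path_def)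
qed

lemma connected_in_stays_in_branch:
  assumes "branch r W" "w \<in> W" "connected_in E X w y" "\<not> connected_in E X w r"
  shows "y \<in> W"
  using assms(3,4) unfolding connected_in_def
proof (induction rule: rtranclp_induct)
  case (step y1 y2)
  then have "y2 \<in> W \<or> y2 = r" using assms(1) by (auto simp: branch_def induced_def)
  moreover have "y2 \<noteq> r" using step(1,2,4) by (auto intro: rtranclp.rtrancl_into_rtrancl)
  ultimately show ?case by blast
qed (rule assms(2))

end

locale graph_path = finite_graph +
  fixes q :: "'a list" and h :: nat
  assumes path: "is_path q" and q_in_V: "set q \<subseteq> V" and length_q: "length q = Suc h"
begin

lemma q_adj: "k < h \<Longrightarrow> E (q ! k) (q ! Suc k)"
  using path length_q by (simp add: is_path_def)

lemma q_nth_eq_iff: "a \<le> h \<Longrightarrow> b \<le> h \<Longrightarrow> q ! a = q ! b \<longleftrightarrow> a = b"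
  using path length_q by (simp add: is_path_def nth_eq_iff_index_eq)

lemma q_nth_in_V: "k \<le> h \<Longrightarrow> q ! k \<in> V"
  using q_in_V length_q by (simp add: subset_iff)

lemma in_set_q: "v \<in> set q \<longleftrightarrow> (\<exists>k\<le>h. v = q ! k)"
  using length_q by (auto simp: in_set_conv_nth less_Suc_eq_le)

end

locale path_cycle = graph_path +
  fixes i :: nat
  assumes chord_gap: "i + 2 \<le> h" and closing: "E (q ! h) (q ! i)"
begin

definition cyc_succ :: "nat \<Rightarrow> nat" where
  "cyc_succ k = (if k = h then i else Suc k)"

lemma cycle_edges: "i < k \<Longrightarrow> k \<le> h \<Longrightarrow> E (q ! k) (q ! (k - 1)) \<and> E (q ! k) (q ! cyc_succ k)"
  using q_adj[of "k - 1"] q_adj[of k] closing adj_sym by (auto simp: cyc_succ_def)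

lemma in_cycle_iff: "v \<in> set (drop i q) \<longleftrightarrow> (\<exists>k. i \<le> k \<and> k \<le> h \<and> v = q ! k)"
proof
  assume "v \<in> set (drop i q)"
  then obtain a where "a < length (drop i q)" "v = drop i q ! a" by (auto simp: in_set_conv_nth)
  then show "\<exists>k. i \<le> k \<and> k \<le> h \<and> v = q ! k"
    using length_q chord_gap by (intro exI[of _ "i + a"]) auto
next
  assume "\<exists>k. i \<le> k \<and> k \<le> h \<and> v = q ! k"
  then obtain k where "i \<le> k" "k \<le> h" "v = q ! k" by blast
  then have "drop i q ! (k - i) = v" "k - i < length (drop i q)" using length_q by auto
  then show "v \<in> set (drop i q)" by (metis nth_mem)
qed

lemma nth_in_cycle: "i \<le> k \<Longrightarrow> k \<le> h \<Longrightarrow> q ! k \<in> set (drop i q)"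
  unfolding in_cycle_iff by blast

definition pendant :: bool where
  "pendant \<longleftrightarrow> (\<forall>k. i < k \<and> k \<le> h \<longrightarrow> nbhd (q ! k) \<subseteq> {q ! (k - 1), q ! cyc_succ k})"

lemma pendant_adj_iff:
  assumes "pendant" "i < k" "k \<le> h"
  shows "E (q ! k) w \<longleftrightarrow> w = q ! (k - 1) \<or> w = q ! cyc_succ k"
  using assms cycle_edges[of k] unfolding pendant_def by (auto simp: subset_iff)

lemma induced_cycle_if_pendant:
  assumes "pendant"
  shows "induced_cycle_set V E (set (drop i q))"
proof -
  define n where "n = Suc (h - i)"
  have n3: "n \<ge> 3" using chord_gap by (simp add: n_def)
  have len: "length (drop i q) = n" using length_q chord_gap by (simp add: n_def)
  have nth: "drop i q ! a = q ! (i + a)" for a using chord_gap length_q by simp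
  have adj_pos: "E (q ! (i + a)) (q ! (i + b)) \<longleftrightarrow> (b = Suc a mod n \<or> a = Suc b mod n)"
    if "0 < a" "a < n" "b < n" for a b
  proof -
    have "E (q ! (i + a)) (q ! (i + b)) \<longleftrightarrow> i + b = i + a - 1 \<or> i + b = cyc_succ (i + a)"
      using pendant_adj_iff[OF assms, of "i + a" "q ! (i + b)"] q_nth_eq_iff that
      by (auto simp: n_def cyc_succ_def)
    also have "\<dots> \<longleftrightarrow> (b = Suc a mod n \<or> a = Suc b mod n)"
      using that chord_gap by (auto simp: n_def cyc_succ_def mod_Suc)
    finally show ?thesis .
  qed
  have adj: "E (drop i q ! a) (drop i q ! b) \<longleftrightarrow> (b = Suc a mod n \<or> a = Suc b mod n)"
    if "a < n" "b < n" for a b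
  proof (cases "0 < a")
    case True then show ?thesis using adj_pos[of a b] that nth by simp
  next
    case False
    show ?thesis
    proof (cases "0 < b")
      case True
      then show ?thesis using adj_pos[of b a] that nth False adj_sym by auto
    next
      case False
      then show ?thesis using \<open>\<not> 0 < a\<close> nth not_adj_self n3 by simp
    qed
  qed
  show ?thesis unfolding induced_cycle_set_def
  proof (intro conjI exI[of _ "drop i q"])
    show "set (drop i q) \<subseteq> V" using q_in_V set_drop_subset by fastforce
    show "distinct (drop i q)" using path by (simp add: is_path_def)
    show "3 \<le> length (drop i q)" using len n3 by simp
  qed (use adj len in auto)
qed

definition every_third :: "'a set" where
  "every_third = (\<lambda>t. q ! (i + 3 * t)) ` {0..(h - i) div 3}"

lemma every_third_mem_iff:
  assumes "i \<le> k" "k \<le> h"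
  shows "q ! k \<in> every_third \<longleftrightarrow> (k - i) mod 3 = 0"
proof
  assume "q ! k \<in> every_third"
  then obtain t where t: "t \<le> (h - i) div 3" "q ! k = q ! (i + 3 * t)"
    by (auto simp: every_third_def)
  then have "i + 3 * t \<le> h" using chord_gap times_div_less_eq_dividend[of 3 "h - i"] by linarith
  then have "k = i + 3 * t" using t assms q_nth_eq_iff by simp
  then show "(k - i) mod 3 = 0" by simp
next
  assume "(k - i) mod 3 = 0"
  then have "k = i + 3 * ((k - i) div 3)" using assms(1) div_mult_mod_eq[of "k - i" 3] by linarith
  moreover have "(k - i) div 3 \<le> (h - i) div 3" using assms by (intro div_le_mono) simp
  ultimately show "q ! k \<in> every_third" unfolding every_third_def by (metis atLeastAtMost_iff image_eqI le0)
qed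

lemma every_third_subset: "every_third \<subseteq> set (drop i q)"
proof
  fix v assume "v \<in> every_third"
  then obtain t where "t \<le> (h - i) div 3" "v = q ! (i + 3 * t)" by (auto simp: every_third_def)
  moreover from this(1) have "i + 3 * t \<le> h"
    using chord_gap times_div_less_eq_dividend[of 3 "h - i"] by linarith
  ultimately show "v \<in> set (drop i q)" unfolding in_cycle_iff by (intro exI[of _ "i + 3 * t"]) simp
qed

lemma card_every_third: "card every_third \<le> Suc ((h - i) div 3)"
  unfolding every_third_def using card_image_le[of "{0..(h - i) div 3}"] by simp

lemma pendant_degree_outside_every_third:
  assumes "pendant" "v \<in> set (drop i q) - every_third"
  shows "card {w \<in> set (drop i q) - every_third. E v w} \<le> 1"
proof -
  obtain k where k: "i \<le> k" "k \<le> h" "v = q ! k" using assms(2) by (auto simp: in_cycle_iff)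
  have m: "(k - i) mod 3 \<noteq> 0" using every_third_mem_iff k assms(2) by blast
  then have ki: "i < k" using k(1) by (cases "k = i") auto
  have "q ! (k - 1) \<in> every_third \<or> q ! cyc_succ k \<in> every_third"
  proof (cases "(k - i) mod 3 = 1")
    case True
    then have "(k - 1 - i) mod 3 = 0"
      unfolding diff_commute[of k 1 i] by (cases "k - i") (auto simp: mod_Suc split: if_splits)
    then show ?thesis using every_third_mem_iff[of "k - 1"] ki k by auto
  next
    case False
    then have m2: "(k - i) mod 3 = 2" using m mod_less_divisor[of 3 "k - i"] by linarith
    show ?thesis
    proof (cases "k = h")
      case True
      then show ?thesis using every_third_mem_iff[of i] chord_gap by (simp add: cyc_succ_def)
    next
      case False
      have "(Suc k - i) mod 3 = 0" using m2 ki by (simp add: Suc_diff_le mod_Suc)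
      then show ?thesis using every_third_mem_iff[of "Suc k"] ki k False by (simp add: cyc_succ_def)
    qed
  qed
  moreover have sub: "{w \<in> set (drop i q) - every_third. E v w} \<subseteq> {q ! (k - 1), q ! cyc_succ k} - every_third"
    using pendant_adj_iff[OF assms(1) ki k(2)] k by auto
  ultimately consider "{w \<in> set (drop i q) - every_third. E v w} \<subseteq> {q ! cyc_succ k}"
    | "{w \<in> set (drop i q) - every_third. E v w} \<subseteq> {q ! (k - 1)}"
    by blast
  then show ?thesis by cases (rule card_le_1_if_subset_singleton; assumption)+
qed

lemma pendant_closed:
  assumes "pendant" "v \<in> set (drop i q) - every_third" "E v w"
  shows "w \<in> set (drop i q)"
proof -
  obtain k where k: "i \<le> k" "k \<le> h" "v = q ! k" using assms(2) by (auto simp: in_cycle_iff)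
  have "k \<noteq> i" using k assms(2) every_third_mem_iff[of i] by auto
  then have "w = q ! (k - 1) \<or> w = q ! cyc_succ k"
    using pendant_adj_iff[OF assms(1), of k w] k assms(3) by simp
  moreover have "q ! (k - 1) \<in> set (drop i q)" "q ! cyc_succ k \<in> set (drop i q)"
    using k \<open>k \<noteq> i\<close> by (auto simp: cyc_succ_def intro!: nth_in_cycle)
  ultimately show ?thesis by auto
qed

lemma pendant_outer_nbhd:
  assumes "pendant"
  shows "outer_nbhd (set (drop i q)) \<subseteq> nbhd (q ! i) - {q ! Suc i, q ! h}"
proof
  fix y assume "y \<in> outer_nbhd (set (drop i q))"
  then obtain s where y: "y \<notin> set (drop i q)" "s \<in> set (drop i q)" "E y s"
    by (auto simp: outer_nbhd_def)
  obtain k where k: "i \<le> k" "k \<le> h" "s = q ! k" using y(2) by (auto simp: in_cycle_iff)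
  have "k = i"
  proof (rule ccontr)
    assume "k \<noteq> i"
    then have "y = q ! (k - 1) \<or> y = q ! cyc_succ k"
      using pendant_adj_iff[OF assms, of k y] k y(3) adj_sym by simp
    moreover have "q ! (k - 1) \<in> set (drop i q)" "q ! cyc_succ k \<in> set (drop i q)"
      using k \<open>k \<noteq> i\<close> by (auto simp: cyc_succ_def intro!: nth_in_cycle)
    ultimately have "y \<in> set (drop i q)" by auto
    then show False using y(1) by simp
  qed
  moreover have "q ! Suc i \<in> set (drop i q)" "q ! h \<in> set (drop i q)"
    using chord_gap by (auto intro!: nth_in_cycle)
  ultimately show "y \<in> nbhd (q ! i) - {q ! Suc i, q ! h}" using y k adj_sym by auto
qed

lemma card_edges_meeting_cycle:
  "card (nbhd (q ! i)) + (h - Suc i) \<le> card (edges_meeting (set (drop i q)))"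
proof -
  define P where "P = (\<lambda>k. {q ! k, q ! Suc k}) ` {Suc i..<h}"
  have "inj_on (\<lambda>k. {q ! k, q ! Suc k}) {Suc i..<h}"
  proof (rule inj_onI)
    fix a b assume ab: "a \<in> {Suc i..<h}" "b \<in> {Suc i..<h}" "{q ! a, q ! Suc a} = {q ! b, q ! Suc b}"
    then have "q ! a = q ! b \<or> q ! a = q ! Suc b" by (auto simp: doubleton_eq_iff)
    moreover have "q ! a \<noteq> q ! Suc b \<or> q ! Suc a = q ! b \<longrightarrow> a = b"
      using ab q_nth_eq_iff by (auto simp: doubleton_eq_iff)
    ultimately show "a = b" using ab q_nth_eq_iff by (auto simp: doubleton_eq_iff)
  qed
  then have "card P = h - Suc i" unfolding P_def by (simp add: card_image)
  moreover have "card (nbhd (q ! i)) + card P \<le> card (edges_meeting (set (drop i q)))"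
  proof (rule card_nbhd_add_le_edges_meeting)
    show "q ! i \<in> set (drop i q)" using chord_gap by (auto intro!: nth_in_cycle)
    show "P \<subseteq> edges_meeting (set (drop i q))"
    proof
      fix e assume "e \<in> P"
      then obtain k where k: "Suc i \<le> k" "k < h" "e = {q ! k, q ! Suc k}" unfolding P_def by auto
      then have "e \<in> edges E" using q_adj[of k] unfolding edges_def by blast
      moreover have "q ! k \<in> set (drop i q)" using k by (auto intro!: nth_in_cycle)
      ultimately show "e \<in> edges_meeting (set (drop i q))" using k by (auto simp: edges_meeting_def)
    qed
    show "\<forall>e\<in>P. q ! i \<notin> e" unfolding P_def using q_nth_eq_iff chord_gap by auto
  qed
  ultimately show ?thesis by simp
qed

lemma reducible_if_pendant:
  assumes "pendant"
  shows "reducible (set (drop i q)) every_third"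
proof (rule reducibleI)
  show "set (drop i q) \<subseteq> V" using q_in_V set_drop_subset by fastforce
  show "set (drop i q) \<noteq> {}" using length_q chord_gap by simp
  show "every_third \<subseteq> set (drop i q)" by (rule every_third_subset)
  show "v \<in> set (drop i q) - every_third \<Longrightarrow> E v w \<Longrightarrow> w \<in> set (drop i q)" for v w
    using pendant_closed[OF assms] by blast
  show "card {w \<in> set (drop i q) - every_third. E v w} \<le> 1" if "v \<in> set (drop i q) - every_third" for v
    using pendant_degree_outside_every_third[OF assms that] .
  have nb: "q ! Suc i \<in> nbhd (q ! i)" "q ! h \<in> nbhd (q ! i)" "q ! Suc i \<noteq> q ! h"
    using q_adj[of i] closing adj_sym q_nth_eq_iff[of "Suc i" h] chord_gap by auto
  have "card (adjacent_components (set (drop i q))) \<le> card (nbhd (q ! i) - {q ! Suc i, q ! h})"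
    using pendant_outer_nbhd[OF assms] finite_nbhd by (intro card_adjacent_components_le) auto
  also have "\<dots> = card (nbhd (q ! i)) - 2" using nb finite_nbhd by (simp add: card_Diff_subset)
  finally have adj: "card (adjacent_components (set (drop i q))) + 2 \<le> card (nbhd (q ! i))"
    using nb finite_nbhd card_mono[of "nbhd (q ! i)" "{q ! Suc i, q ! h}"] by simp
  txt \<open>h - i is divisible by 3 exactly when the cycle length h - i + 1 is 1 mod 3.\<close>
  have credit: "3 * ((h - i) div 3) + 1 \<le> (h - i) + of_bool (contains_c1_cycle (set (drop i q)))"
  proof (cases "(h - i) mod 3 = 0")
    case True
    have "card (set (drop i q)) = Suc (h - i)"
      using path length_q chord_gap by (simp add: is_path_def distinct_card)
    then have "card (set (drop i q)) mod 3 = 1" using True by (simp add: mod_Suc)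
    then have "contains_c1_cycle (set (drop i q))"
      using induced_cycle_if_pendant[OF assms] unfolding contains_c1_cycle_def by blast
    then show ?thesis using True div_mult_mod_eq[of "h - i" 3] by simp
  next
    case False
    then show ?thesis using div_mult_mod_eq[of "h - i" 3] by linarith
  qed
  show "3 * card every_third + card (adjacent_components (set (drop i q)))
    \<le> card (edges_meeting (set (drop i q))) + 1 + of_bool (contains_c1_cycle (set (drop i q)))"
    using card_every_third adj card_edges_meeting_cycle credit chord_gap by linarith
qed

lemma connected_around_cycle:
  assumes "i < p" "p < h" "i \<le> a" "a \<le> h" "a \<noteq> p"
    and avoid: "\<forall>k. i \<le> k \<and> k \<le> h \<and> k \<noteq> p \<longrightarrow> q ! k \<notin> X"
  shows "connected_in E (V - X) (q ! a) (q ! i)"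
proof (cases "a < p")
  case True
  then show ?thesis using assms length_q q_in_V
    by (intro connected_in_along_path_avoiding[OF path]) (auto simp: min_def max_def)
next
  case False
  have "connected_in E (V - X) (q ! a) (q ! h)"
    using assms False length_q q_in_V
    by (intro connected_in_along_path_avoiding[OF path]) (auto simp: min_def max_def)
  moreover have "connected_in E (V - X) (q ! h) (q ! i)"
    using avoid assms(1,2) chord_gap q_nth_in_V closing by (intro connected_in_edge) auto
  ultimately show ?thesis by (rule connected_in_trans)
qed

lemma cycle_neighbours_connected:
  assumes "i < p" "p < h" and avoid: "\<forall>k. i \<le> k \<and> k \<le> h \<and> k \<noteq> p \<longrightarrow> q ! k \<notin> X"
  shows "connected_in E (V - X) (q ! (p - 1)) (q ! Suc p)"
proof -
  have "connected_in E (V - X) (q ! (p - 1)) (q ! i)" "connected_in E (V - X) (q ! Suc p) (q ! i)"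
    using assms by (auto intro!: connected_around_cycle)
  then show ?thesis using connected_in_trans connected_in_sym by metis
qed

lemma reducible_if_chord_reconnects:
  assumes "i < p" "p < h" "E (q ! p) w" "w \<noteq> q ! (p - 1)" "w \<noteq> q ! Suc p"
    and "i \<le> a" "a \<le> h" "a \<noteq> p" "connected_in E (V - {q ! p}) w (q ! a)"
  shows "reducible {q ! p} {q ! p}"
proof (rule reducible_singleton)
  let ?comp = "comp_of {q ! p}"
  have avoid: "\<forall>k. i \<le> k \<and> k \<le> h \<and> k \<noteq> p \<longrightarrow> q ! k \<notin> {q ! p}"
    using q_nth_eq_iff assms(2) by auto
  have "?comp w = ?comp (q ! i)"
    using assms(1-2,6-9) connected_around_cycle[OF _ _ _ _ _ avoid] connected_in_trans comp_of_eq
    by metis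
  moreover have "?comp (q ! (p - 1)) = ?comp (q ! i)" "?comp (q ! Suc p) = ?comp (q ! i)"
    using assms(1,2) connected_around_cycle[OF _ _ _ _ _ avoid] comp_of_eq by simp_all
  moreover have "q ! (p - 1) \<in> nbhd (q ! p)" "q ! Suc p \<in> nbhd (q ! p)"
    using cycle_edges[of p] assms(1,2) by (simp_all add: cyc_succ_def)
  moreover have "q ! (p - 1) \<noteq> q ! Suc p" using q_nth_eq_iff[of "p - 1" "Suc p"] assms(2) by simp
  ultimately have "card (?comp ` nbhd (q ! p)) + 2 \<le> card (nbhd (q ! p))"
    using assms(3-5) finite_nbhd by (intro card_image_add_two_le[of _ w "q ! (p - 1)" "q ! Suc p"]) auto
  moreover have "card (adjacent_components {q ! p}) \<le> card (?comp ` nbhd (q ! p))"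
    using outer_nbhd_subset_nbhd[of "{q ! p}"] finite_nbhd
    by (intro card_adjacent_components_le_image) auto
  ultimately show "card (adjacent_components {q ! p}) + 2 \<le> card (nbhd (q ! p))" by simp
  show "q ! p \<in> V" using q_nth_in_V assms(2) by simp
qed

end

locale longest_path = graph_path +
  fixes r :: 'a and W :: "'a set"
  assumes branch: "branch r W" and q_first: "q ! 0 = r" and q_subset: "set q \<subseteq> insert r W"
    and longest: "\<And>p. p \<in> rooted_paths r W \<Longrightarrow> length p \<le> Suc h"
begin

lemma root_in_V: "r \<in> V" and W_subset: "W \<subseteq> V" and root_notin: "r \<notin> W"
  and W_closed: "u \<in> W \<Longrightarrow> E u v \<Longrightarrow> v \<in> W \<or> v = r"
  using branch unfolding branch_def by blast+

lemma branch_cases: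
  "W = V - {r} \<or> ((\<exists>w\<in>W. E r w) \<and> (\<exists>y z. y \<noteq> z \<and> E r y \<and> E r z \<and> y \<notin> W \<and> z \<notin> W
     \<and> connected_in E (V - insert r W) y z))"
  using branch unfolding branch_def by blast

lemma q_nth_in_W:
  assumes "0 < k" "k \<le> h" shows "q ! k \<in> W"
proof -
  have "q ! k \<in> insert r W" using q_subset assms(2) length_q by (simp add: subset_iff)
  moreover have "q ! k \<noteq> r" using q_first q_nth_eq_iff[of k 0] assms by simp
  ultimately show ?thesis by simp
qed

lemma nbhd_last_subset:
  assumes "0 < h" shows "nbhd (q ! h) \<subseteq> set q"
proof
  fix y assume y: "y \<in> nbhd (q ! h)"
  show "y \<in> set q"
  proof (rule ccontr)
    assume "y \<notin> set q"
    moreover have "y \<in> insert r W"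
      using y W_closed[of "q ! h" y] q_nth_in_W[of h] assms by auto
    moreover have "q \<noteq> []" using length_q by auto
    moreover have "last q = q ! h" using length_q \<open>q \<noteq> []\<close> by (simp add: last_conv_nth)
    ultimately have "q @ [y] \<in> rooted_paths r W"
      using q_first q_subset y length_q is_path_snoc[OF path]
      by (auto simp: rooted_paths_def nth_append)
    then show False using longest[of "q @ [y]"] length_q by simp
  qed
qed

lemma reducible_if_trivial_path:
  assumes "h = 0"
  shows "reducible {r} {}"
proof (rule reducible_isolated_vertex[OF root_in_V])
  have no_W: "\<not> E r w" if "w \<in> W" for w
  proof
    assume "E r w"
    then have "[r, w] \<in> rooted_paths r W"
      using that root_notin by (auto simp: rooted_paths_def is_path_def)
    then show False using longest assms by fastforce
  qed
  then have W: "W = V - {r}" using branch_cases by blast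
  have "\<not> E r u" for u
    using no_W[of u] adj_in_V(2)[of r u] adj_neq[of r u] W by blast
  then show "nbhd r = {}" by (simp add: nbhd_eq_iff)
qed

lemma reducible_if_last_degree_ge_3:
  assumes "0 < h" "3 \<le> card (nbhd (q ! h))"
  shows "reducible {q ! h} {q ! h}"
proof (rule reducible_singleton)
  let ?comp = "comp_of {q ! h}"
  show "q ! h \<in> V" by (rule q_nth_in_V) simp
  have "?comp y = ?comp r" if "y \<in> nbhd (q ! h)" for y
  proof -
    have "y \<in> set q" using nbhd_last_subset[OF assms(1)] that by (rule subsetD)
    then obtain k where k: "k \<le> h" "y = q ! k" by (auto simp: in_set_q)
    then have "k < h" using that not_adj_self by (cases "k = h") auto
    then have "\<forall>j. min k 0 \<le> j \<and> j \<le> max k 0 \<longrightarrow> q ! j \<notin> {q ! h}"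
      using q_nth_eq_iff by auto
    then have "connected_in E (V - {q ! h}) (q ! k) (q ! 0)"
      using \<open>k < h\<close> length_q by (intro connected_in_along_path_avoiding[OF path q_in_V]) auto
    then show ?thesis using k q_first comp_of_eq by simp
  qed
  then have "?comp ` nbhd (q ! h) \<subseteq> {?comp r}" by auto
  then have "card (?comp ` nbhd (q ! h)) \<le> 1" by (rule card_le_1_if_subset_singleton)
  moreover have "card (adjacent_components {q ! h}) \<le> card (?comp ` nbhd (q ! h))"
    using outer_nbhd_subset_nbhd[of "{q ! h}"] finite_nbhd
    by (intro card_adjacent_components_le_image) auto
  ultimately show "card (adjacent_components {q ! h}) + 2 \<le> card (nbhd (q ! h))"
    using assms(2) by linarith
qed

lemma root_neighbours_are_leaves:
  assumes "h = 1" "W = V - {r}" "E r z"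
  shows "nbhd z = {r}"
proof -
  have "\<not> E z v" if "v \<noteq> r" for v
  proof
    assume zv: "E z v"
    have "z \<in> W" "v \<in> W" using assms(2,3) zv \<open>v \<noteq> r\<close> adj_in_V(2) adj_neq by auto
    then have "[r, z, v] \<in> rooted_paths r W"
      using assms(3) zv root_notin adj_neq[OF zv]
      by (auto simp: rooted_paths_def is_path_def less_Suc_eq nth_Cons')
    then show False using longest assms(1) by fastforce
  qed
  then show ?thesis using assms(3) adj_sym by (auto simp: nbhd_eq_iff)
qed

lemma reducible_if_leaf_at_root:
  assumes "h = 1" "nbhd (q ! 1) = {r}"
  shows "\<exists>S T. reducible S T"
proof -
  let ?x = "q ! 1"
  have xW: "?x \<in> W" using q_nth_in_W assms(1) by simp
  have rx: "E r ?x" using q_adj[of 0] q_first assms(1) by simp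
  consider "W = V - {r}"
    | y z where "y \<noteq> z" "E r y" "E r z" "y \<notin> W" "z \<notin> W" "connected_in E (V - insert r W) y z"
    using branch_cases by blast
  then show ?thesis
  proof cases
    case 1
    note leaf = root_neighbours_are_leaves[OF assms(1) 1]
    show ?thesis
    proof (cases "nbhd r = {?x}")
      case True
      then show ?thesis using reducible_isolated_edge[OF assms(2)] by blast
    next
      case False
      then obtain z where "E r z" "z \<noteq> ?x" using rx by (auto simp: nbhd_eq_iff)
      then show ?thesis using reducible_two_leaves[OF assms(2) leaf] by metis
    qed
  next
    case 2
    have "reducible {?x, r} {r}"
    proof (rule reducible_leaf_pair[OF assms(2)])
      have "V - insert r W \<subseteq> V - {?x, r}" using xW by auto
      then have "comp_of {?x, r} y = comp_of {?x, r} z" using 2(6) connected_in_mono comp_of_eq by metis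
      then show "card (comp_of {?x, r} ` (nbhd r - {?x})) < card (nbhd r - {?x})"
        using 2 xW finite_nbhd by (intro card_image_less_if_not_inj[of _ y z]) auto
    qed
    then show ?thesis by blast
  qed
qed

lemma detour_neighbour_on_path:
  assumes "0 < h" "w \<in> W" "w \<notin> set q" "E (q ! (h - 1)) w" "E w y"
  shows "y \<in> set q"
proof (rule ccontr)
  assume y: "y \<notin> set q"
  let ?p = "take h q"
  have p1: "?p \<noteq> []" using assms(1) length_q by auto
  then have p: "?p \<noteq> []" "last ?p = q ! (h - 1)" "set ?p \<subseteq> set q"
    using assms(1) length_q by (simp_all add: last_conv_nth min_def set_take_subset)
  have "is_path (?p @ [w])"
    using is_path_snoc[OF is_path_take[OF path] p(1)] p assms(3,4) by auto
  moreover have "w \<noteq> y" using adj_neq assms(5) by simp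
  ultimately have "is_path ((?p @ [w]) @ [y])"
    using is_path_snoc assms(5) y p(3) by fastforce
  moreover have "((?p @ [w]) @ [y]) ! 0 = r" using p(1) q_first by (simp add: nth_append)
  moreover have "set ((?p @ [w]) @ [y]) \<subseteq> insert r W"
    using q_subset p(3) assms(2,5) W_closed by auto
  ultimately have "(?p @ [w]) @ [y] \<in> rooted_paths r W" by (simp add: rooted_paths_def)
  then show False using longest assms(1) length_q by fastforce
qed

lemma connected_along_prefix:
  assumes "k \<le> h - 2" "2 \<le> h"
  shows "connected_in E (V - {q ! h, q ! (h - 1)}) (q ! k) (q ! (h - 2))"
  using assms length_q q_nth_eq_iff
  by (intro connected_in_along_path_avoiding[OF path q_in_V]) (auto simp: max_def)

lemma connected_past_leaf:
  assumes "2 \<le> h" "nbhd (q ! h) = {q ! (h - 1)}" "E (q ! (h - 1)) w" "w \<noteq> q ! h"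
    and "\<not> (w \<notin> set q \<and> nbhd w = {q ! (h - 1)})"
  shows "connected_in E (V - {q ! h, q ! (h - 1)}) w (q ! (h - 2))"
proof (cases "w \<in> set q")
  case True
  then obtain k where k: "k \<le> h" "w = q ! k" using in_set_q by blast
  then have "k \<noteq> h" "k \<noteq> h - 1" using assms(3,4) adj_neq by auto
  then show ?thesis using connected_along_prefix[of k] k assms(1) by simp
next
  case False
  have u: "q ! (h - 1) \<in> W" using q_nth_in_W assms(1) by simp
  have wW: "w \<in> W"
    using W_closed[OF u assms(3)] False q_first length_q nth_mem[of 0 q] by auto
  obtain y where wy: "E w y" "y \<noteq> q ! (h - 1)"
    using assms(5) False adj_sym[OF assms(3)] by (auto simp: nbhd_eq_iff)
  have "y \<in> set q" using detour_neighbour_on_path[OF _ wW False assms(3) wy(1)] assms(1) by simp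
  then obtain k where k: "k \<le> h" "y = q ! k" using in_set_q by blast
  have "y \<noteq> q ! h"
  proof
    assume "y = q ! h"
    then have "w = q ! (h - 1)" using wy(1) adj_sym assms(2) by (auto simp: nbhd_eq_iff)
    then show False using assms(3) not_adj_self by simp
  qed
  then have kh: "k \<le> h - 2" using k wy(2) by (cases "k = h \<or> k = h - 1") auto
  have "w \<noteq> q ! j" if "j \<le> h" for j using False that length_q by (metis le_imp_less_Suc nth_mem)
  then have "connected_in E (V - {q ! h, q ! (h - 1)}) w y"
    using wy k kh assms(1) q_nth_eq_iff adj_in_V by (intro connected_in_edge) auto
  then show ?thesis using connected_along_prefix[OF kh assms(1)] k connected_in_trans by simp
qed

lemma reducible_if_leaf_deep:
  assumes "2 \<le> h" "nbhd (q ! h) = {q ! (h - 1)}"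
  shows "\<exists>S T. reducible S T"
proof -
  let ?x = "q ! h" and ?u = "q ! (h - 1)" and ?v = "q ! (h - 2)"
  have ux: "E ?u ?x" using q_adj[of "h - 1"] assms(1) by simp
  have uv: "E ?u ?v" using q_adj[of "h - 2"] adj_sym assms(1) by (simp add: Suc_diff_Suc numeral_2_eq_2)
  have xv: "?x \<noteq> ?v" using q_nth_eq_iff[of h "h - 2"] assms(1) by simp
  show ?thesis
  proof (cases "nbhd ?u = {?x, ?v}")
    case True
    then show ?thesis using reducible_pendant_path[OF assms(2) True xv] by blast
  next
    case False
    then obtain w where w: "E ?u w" "w \<noteq> ?x" "w \<noteq> ?v" using ux uv by (auto simp: nbhd_eq_iff)
    show ?thesis
    proof (cases "w \<notin> set q \<and> nbhd w = {?u}")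
      case True
      then have "w \<noteq> ?x" using length_q by auto
      then show ?thesis using reducible_two_leaves[OF assms(2)] True by blast
    next
      case False
      have "comp_of {?x, ?u} w = comp_of {?x, ?u} ?v"
        using connected_past_leaf[OF assms w(1,2) False] comp_of_eq by simp
      then have "card (comp_of {?x, ?u} ` (nbhd ?u - {?x})) < card (nbhd ?u - {?x})"
        using w uv xv finite_nbhd by (intro card_image_less_if_not_inj[of _ w ?v]) auto
      then show ?thesis using reducible_leaf_pair[OF assms(2)] by blast
    qed
  qed
qed

lemma path_cycle_at:
  assumes "i + 2 \<le> h" "E (q ! h) (q ! i)"
  shows "path_cycle V E q h i"
  unfolding path_cycle_def path_cycle_axioms_def using graph_path_axioms assms by blast

lemma smaller_branch_if_chord_escapes:
  assumes cyc: "i + 2 \<le> h" "E (q ! h) (q ! i)"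
    and p: "i < p" "p < h" and w: "E (q ! p) w" "w \<noteq> q ! (p - 1)" "w \<noteq> q ! Suc p"
    and escapes: "\<forall>a. i \<le> a \<and> a \<le> h \<and> a \<noteq> p \<longrightarrow> \<not> connected_in E (V - {q ! p}) w (q ! a)"
  defines "W' \<equiv> {y. connected_in E (V - {q ! p}) w y}"
  shows "branch (q ! p) W' \<and> W' \<subset> W"
proof -
  interpret cyc: path_cycle V E q h i by (rule path_cycle_at[OF cyc])
  let ?z = "q ! p"
  have zW: "?z \<in> W" using q_nth_in_W p by simp
  have wV: "w \<in> V - {?z}" using w(1) adj_in_V(2) adj_neq by auto
  have W'V: "W' \<subseteq> V - {?z}" using connected_in_closed[OF _ wV] by (auto simp: W'_def)
  have avoid: "\<forall>k. i \<le> k \<and> k \<le> h \<and> k \<noteq> p \<longrightarrow> q ! k \<notin> W'"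
    using escapes by (auto simp: W'_def)
  have "connected_in E (V - {?z}) (q ! 0) (q ! i)"
    using p length_q q_nth_eq_iff by (intro connected_in_along_path_avoiding[OF path q_in_V]) auto
  then have rW': "\<not> connected_in E (V - {?z}) w r"
    using escapes p q_first connected_in_trans by fastforce
  then have "w \<in> W" using W_closed[OF zW w(1)] connected_in_refl[of E "V - {?z}" r] by auto
  then have W'W: "W' \<subseteq> W" using connected_in_stays_in_branch[OF branch _ _ rW'] by (auto simp: W'_def)
  have closed: "v \<in> W' \<or> v = ?z" if "y \<in> W'" "E y v" for y v
  proof (cases "v = ?z")
    case False
    then have "connected_in E (V - {?z}) y v"
      using that W'V adj_in_V(2) by (intro connected_in_edge) auto
    then show ?thesis using that(1) connected_in_trans by (auto simp: W'_def)
  qed simp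
  have "i \<le> p - 1" "p - 1 \<le> h" "p - 1 \<noteq> p" using p by auto
  then have "q ! (p - 1) \<notin> W'" using avoid by blast
  moreover have "q ! Suc p \<notin> W'" using avoid p by auto
  moreover have "E ?z (q ! (p - 1))" "E ?z (q ! Suc p)"
    using cyc.cycle_edges[of p] p by (simp_all add: cyc.cyc_succ_def)
  moreover have "q ! (p - 1) \<noteq> q ! Suc p" using q_nth_eq_iff[of "p - 1" "Suc p"] p by simp
  moreover have "connected_in E (V - insert ?z W') (q ! (p - 1)) (q ! Suc p)"
    using avoid q_nth_eq_iff p by (intro cyc.cycle_neighbours_connected) auto
  moreover have "w \<in> W'" by (simp add: W'_def connected_in_refl)
  ultimately have "branch ?z W'"
    unfolding branch_def using zW W_subset W'V closed w(1) by blast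
  then show ?thesis using W'W zW W'V by blast
qed

lemma reducible_or_smaller_branch_if_last_degree_2:
  assumes "0 < h" "nbhd (q ! h) = {q ! (h - 1), c}" "c \<noteq> q ! (h - 1)"
  shows "(\<exists>S T. reducible S T) \<or> (\<exists>z W'. branch z W' \<and> W' \<subset> W)"
proof -
  have adj_last: "E (q ! h) t \<longleftrightarrow> t = q ! (h - 1) \<or> t = c" for t
    using assms(2) by (auto simp: nbhd_eq_iff)
  have "c \<in> set q" using nbhd_last_subset[OF assms(1)] assms(2) by auto
  then obtain i where i: "i \<le> h" "c = q ! i" by (auto simp: in_set_q)
  then have "i \<noteq> h" "i \<noteq> h - 1" using adj_last[of c] not_adj_self assms(3) by auto
  then have gap: "i + 2 \<le> h" using i(1) by linarith
  have closing: "E (q ! h) (q ! i)" using adj_last i by simp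
  interpret cyc: path_cycle V E q h i by (rule path_cycle_at[OF gap closing])
  show ?thesis
  proof (cases cyc.pendant)
    case True
    then show ?thesis using cyc.reducible_if_pendant by blast
  next
    case False
    then obtain p w where pw: "i < p" "p \<le> h" "E (q ! p) w"
      "w \<noteq> q ! (p - 1)" "w \<noteq> q ! cyc.cyc_succ p"
      unfolding cyc.pendant_def by (auto simp: subset_iff)
    have "p \<noteq> h" using pw adj_last i by (auto simp: cyc.cyc_succ_def)
    then have ph: "p < h" and succ: "cyc.cyc_succ p = Suc p"
      using pw(2) by (auto simp: cyc.cyc_succ_def)
    show ?thesis
    proof (cases "\<exists>a. i \<le> a \<and> a \<le> h \<and> a \<noteq> p \<and> connected_in E (V - {q ! p}) w (q ! a)")
      case True
      then obtain a where "i \<le> a" "a \<le> h" "a \<noteq> p" "connected_in E (V - {q ! p}) w (q ! a)"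
        by blast
      then have "reducible {q ! p} {q ! p}"
        using pw ph succ by (intro cyc.reducible_if_chord_reconnects) auto
      then show ?thesis by blast
    next
      case False
      then have "\<forall>a. i \<le> a \<and> a \<le> h \<and> a \<noteq> p \<longrightarrow> \<not> connected_in E (V - {q ! p}) w (q ! a)"
        by blast
      moreover have "w \<noteq> q ! Suc p" using pw(5) succ by simp
      ultimately show ?thesis
        using smaller_branch_if_chord_escapes[OF gap closing pw(1) ph pw(3,4)] by blast
    qed
  qed
qed

end

context finite_graph
begin

lemma longest_rooted_path_exists:
  assumes "branch r W"
  obtains q h where "longest_path V E q h r W"
proof -
  let ?P = "rooted_paths r W"
  have fin: "finite (length ` ?P)" using assms finite_rooted_paths by (simp add: branch_def)
  have "[r] \<in> ?P" by (simp add: rooted_paths_def is_path_def)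
  then have "Max (length ` ?P) \<in> length ` ?P" using fin by (intro Max_in) auto
  then obtain q where q: "q \<in> ?P" "length q = Max (length ` ?P)" by auto
  then have "length q' \<le> length q" if "q' \<in> ?P" for q' using fin that by simp
  moreover have "length q = Suc (length q - 1)" using q(1) by (simp add: rooted_paths_def)
  moreover have "set q \<subseteq> V" using q(1) assms by (auto simp: rooted_paths_def branch_def)
  ultimately show ?thesis
    using that[of q "length q - 1"] q(1)
    by (simp add: longest_path_def longest_path_axioms_def graph_path_def graph_path_axioms_def
        finite_graph_axioms rooted_paths_def assms)
qed

lemma exists_reducible_of_branch: "branch r W \<Longrightarrow> \<exists>S T. reducible S T"
proof (induction "card W" arbitrary: r W rule: less_induct)
  case less
  obtain q h where "longest_path V E q h r W" using longest_rooted_path_exists[OF less.prems] .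
  then interpret longest_path V E q h r W .
  show ?case
  proof (cases "h = 0")
    case True
    then show ?thesis using reducible_if_trivial_path by blast
  next
    case False
    let ?x = "q ! h" and ?u = "q ! (h - 1)"
    have u: "?u \<in> nbhd ?x" using q_adj[of "h - 1"] False adj_sym by simp
    then have "card (nbhd ?x) \<noteq> 0" using finite_nbhd by auto
    then consider "3 \<le> card (nbhd ?x)" | "card (nbhd ?x) = 1" | "card (nbhd ?x) = 2" by linarith
    then show ?thesis
    proof cases
      case 1
      then show ?thesis using reducible_if_last_degree_ge_3 False by blast
    next
      case 2
      then obtain y where "nbhd ?x = {y}" by (rule card_1_singletonE)
      then have leaf: "nbhd ?x = {?u}" using u by simp
      show ?thesis
      proof (cases "h = 1")
        case True
        then show ?thesis using reducible_if_leaf_at_root leaf q_first by simp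
      next
        case False
        then show ?thesis using reducible_if_leaf_deep leaf \<open>h \<noteq> 0\<close> by simp
      qed
    next
      case 3
      then obtain a b where ab: "nbhd ?x = {a, b}" "a \<noteq> b" by (auto simp: card_2_iff)
      define c where "c = (if ?u = a then b else a)"
      have c: "nbhd ?x = {?u, c}" "c \<noteq> ?u" using ab u by (auto simp: c_def)
      have "finite W" using W_subset finite_V finite_subset by blast
      then show ?thesis
        using reducible_or_smaller_branch_if_last_degree_2[OF _ c] False less.hyps psubset_card_mono
        by blast
    qed
  qed
qed

lemma exists_reducible:
  assumes "V \<noteq> {}"
  shows "\<exists>S T. reducible S T"
proof -
  obtain r where "r \<in> V" using assms by blast
  then have "branch r (V - {r})" unfolding branch_def using adj_in_V by auto
  then show ?thesis by (rule exists_reducible_of_branch)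
qed

end

lemma three_card_le_diss_budget:
  "simple_graph V E \<Longrightarrow> 3 * card V \<le> 3 * diss V E + budget V E"
proof (induction "card V" arbitrary: V E rule: less_induct)
  case less
  interpret finite_graph V E by unfold_locales (rule less.prems)
  show ?case
  proof (cases "V = {}")
    case False
    then obtain S T where ST: "reducible S T" using exists_reducible by blast
    then have "V - S \<subset> V" by (auto simp: reducible_def)
    then have "card (V - S) < card V" using finite_V by (rule psubset_card_mono[rotated])
    then show ?thesis using less.hyps[OF _ simple_graph_delete] bound_from_reducible[OF ST] by blast
  qed simp
qed

theorem theorem1:
  fixes V :: "'a set" and E :: "'a \<Rightarrow> 'a \<Rightarrow> bool"
  assumes "simple_graph V E"
  shows "real (diss V E) \<ge> real (card V)
           - (real (num_edges E) + real (num_components V E) + real (c1 V E)) / 3"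
proof -
  have "3 * card V \<le> 3 * diss V E + budget V E" by (rule three_card_le_diss_budget[OF assms])
  then have "3 * real (card V)
    \<le> 3 * real (diss V E) + real (num_edges E) + real (num_components V E) + real (c1 V E)"
    unfolding budget_def by linarith
  then show ?thesis by (simp add: field_simps)
qed

end
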